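(* Fix one of the two variants $\sharp\in\{\text{lumped},\text{exact}\}$ described in the context. Let $\vec X^m\in\underline V^h_{\partial_0}$ satisfy assumption $(\mathfrak A)$, let $\Delta t_m>0$, and let $(\delta\vec X^{m+1},\kappa^{m+1})\in\underline V^h_\partial\times W_\sharp$ satisfy, with $\vec X^{m+1}=\vec X^m+\delta\vec X^{m+1}$, $$\Big(\vec X^m\cdot\vec e_1\,\tfrac{\vec X^{m+1}-\vec X^m}{\Delta t_m},\chi\,\vec\nu^m|\vec X^m_\rho|\Big)_\sharp=\Big(\vec X^m\cdot\vec e_1\,\kappa^{m+1},\chi|\vec X^m_\rho|\Big)_\sharp-\frac{(\vec X^m\cdot\vec e_1,\kappa^{m+1}|\vec X^m_\rho|)_\sharp}{(\vec X^m\cdot\vec e_1,|\vec X^m_\rho|)}\,\big(\vec X^m\cdot\vec e_1,\chi|\vec X^m_\rho|\big)_\sharp\quad\forall\chi\in W_\sharp,$$ $$\Big(\vec X^m\cdot\vec e_1\,\kappa^{m+1}\vec\nu^m,\vec\eta\,|\vec X^m_\rho|\Big)_\sharp+\big(\vec\eta\cdot\vec e_1,|\vec X^{m+1}_\rho|\big)+\Big((\vec X^m\cdot\vec e_1)\vec X^{m+1}_\rho,\vec\eta_\rho|\vec X^m_\rho|^{-1}\Big)=B^m(\vec\eta)\quad\forall\vec\eta\in\underline V^h_\partial.$$ Then $$\tfrac1{2\pi}\big(E(\vec X^m)-E(\vec X^{m+1})\big)\ge\Delta t_m\Big[\big(\vec X^m\cdot\vec e_1\,|\kappa^{m+1}|^2,|\vec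 X^m_\rho|\big)_\sharp-\frac{\big|(\vec X^m\cdot\vec e_1,\kappa^{m+1}|\vec X^m_\rho|)_\sharp\big|^2}{(\vec X^m\cdot\vec e_1,|\vec X^m_\rho|)}\Big]\ge0 .$$
   Context: Setup. $\vec e_1=(1,0)^T$, $\vec e_2=(0,1)^T$; "$\cdot$" is the Euclidean inner product; $[r]_+=\max\{r,0\}$, $[r]_-=-\max\{-r,0\}$. $I$ is either the periodic interval $\mathbb R/\mathbb Z$ (with $\partial I=\emptyset$) or $I=(0,1)$ (with $\partial I=\{0,1\}$). $\partial I=\partial_DI\cup\partial_0I\cup\partial_1I\cup\partial_2I$ is a given disjoint partition, and $\widehat\varrho^{(p)}\in\mathbb R$, $p\in\{0,1\}$, are given constants with $|\widehat\varrho^{(p)}|\le1$. Let $J\ge3$, $h=1/J$, $q_j=jh$ ($j=0,\dots,J$; $q_0=q_J$ identified in the periodic case). $V^h$ is the space of continuous functions on $\overline I$ (periodic if $I=\mathbb R/\mathbb Z$) that are affine on each $[q_{j-1},q_j]$; $\underline V^h=[V^h]^2$; $\underline V^h_{\partial_0}=\{\vec\eta\in\underline V^h:\vec\eta(\rho)\cdot\vec e_1=0\ \forall\rho\in\partial_0I\}$; $\underline V^h_\partial=\{\vec\eta\in\underline V^h_{\partial_0}:\vec\eta(\rho)\cdot\vec e_i=0\ \forall\rho\in\partial_iI,\ i=1,2;\ \vec\eta(\rho)=\vec0\ \forall\rho\in\partial_DI\}$; $W^h_{\partial_0}=\{\chi\in V^h:\chi(\rho)=0\ \forall\rho\in\partial_0I\}$.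 $(\cdot,\cdot)$ is the $L^2(I)$ inner product, and for piecewise continuous $f,g$ the mass-lumped product is $(f,g)^h=\tfrac h2\sum_{j=1}^J[(fg)(q_j^-)+(fg)(q_{j-1}^+)]$. Two variants: "lumped": $(\cdot,\cdot)_\sharp=(\cdot,\cdot)^h$, $W_\sharp=W^h_{\partial_0}$; "exact": $(\cdot,\cdot)_\sharp=(\cdot,\cdot)$, $W_\sharp=V^h$. $\vec\nu^m=-[\vec X^m_\rho]^\perp/|\vec X^m_\rho|$ with $(a,b)^\perp=(b,-a)$. Assumption $(\mathfrak A)$: $|\vec X^m_\rho|>0$ a.e. on $I$ and $\vec X^m(\rho)\cdot\vec e_1>0$ for all $\rho\in\overline I\setminus\partial_0I$. $B^m(\vec\eta)=-\sum_{p\in\partial_1I}\widehat\varrho^{(p)}(\vec X^m(p)\cdot\vec e_1)\vec\eta(p)\cdot\vec e_2-\sum_{p\in\partial_2I}\big(([\widehat\varrho^{(p)}]_+\vec X^{m+1}(p)+[\widehat\varrho^{(p)}]_-\vec X^m(p))\cdot\vec e_1\big)\vec\eta(p)\cdot\vec e_1$. The discrete energy of $\vec X\in\underline V^h$ is $E(\vec X)=2\pi(\vec X\cdot\vec e_1,|\vec X_\rho|)+2\pi\sum_{p\in\partial_1I}\widehat\varrho^{(p)}(\vec X(p)\cdot\vec e_1)(\vec X(p)\cdot\vec e_2)+\pi\sum_{p\in\partial_2I}\widehat\varrho^{(p)}(\vec X(p)\cdot\vec e_1)^2$. *)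

theory Defs
  imports "HOL-Analysis.Analysis"
begin

text \<open>Discrete functions in V^h are represented by their
  nodal values f 0, ..., f J (values at indices > J are irrelevant);
  in the periodic case f J = f 0.  Element-wise quantities are functions
  g j rho for the element [q_(j-1), q_j], j = 1..J.\<close>

type_synonym vec = "real \<times> real"

definition e1 :: vec where "e1 = (1, 0)"
definition e2 :: vec where "e2 = (0, 1)"
definition perp :: "vec \<Rightarrow> vec" where "perp v = (snd v, - fst v)"

definition pos_part :: "real \<Rightarrow> real" where "pos_part r = max r 0"
definition neg_part :: "real \<Rightarrow> real" where "neg_part r = - max (- r) 0"

definition node :: "nat \<Rightarrow> nat \<Rightarrow> real" where "node J j = real j / real J"

definition loc :: "nat \<Rightarrow> (nat \<Rightarrow> 'a::real_vector) \<Rightarrow> nat \<Rightarrow> real \<Rightarrow> 'a" where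
  "loc J f j \<rho> = f (j - 1) + ((\<rho> - node J (j - 1)) * real J) *\<^sub>R (f j - f (j - 1))"

definition dloc :: "nat \<Rightarrow> (nat \<Rightarrow> 'a::real_vector) \<Rightarrow> nat \<Rightarrow> real \<Rightarrow> 'a" where
  "dloc J f j \<rho> = real J *\<^sub>R (f j - f (j - 1))"

definition elem :: "nat \<Rightarrow> real \<Rightarrow> nat" where
  "elem J \<rho> = (if \<rho> \<le> 0 then 1 else min J (nat \<lceil>\<rho> * real J\<rceil>))"

definition fun_of :: "nat \<Rightarrow> (nat \<Rightarrow> 'a::real_vector) \<Rightarrow> real \<Rightarrow> 'a" where
  "fun_of J f \<rho> = loc J f (elem J \<rho>) \<rho>"

definition ipE :: "nat \<Rightarrow> (nat \<Rightarrow> real \<Rightarrow> 'a::real_inner) \<Rightarrow> (nat \<Rightarrow> real \<Rightarrow> 'a) \<Rightarrow> real" where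
  "ipE J f g = (\<Sum>j = 1..J. integral {node J (j - 1) .. node J j} (\<lambda>\<rho>. inner (f j \<rho>) (g j \<rho>)))"

text \<open>Mass-lumped inner product (one-sided limits = element-wise endpoint values).\<close>
definition ipL :: "nat \<Rightarrow> (nat \<Rightarrow> real \<Rightarrow> 'a::real_inner) \<Rightarrow> (nat \<Rightarrow> real \<Rightarrow> 'a) \<Rightarrow> real" where
  "ipL J f g = ((1 / real J) / 2) * (\<Sum>j = 1..J.
      inner (f j (node J j)) (g j (node J j)) + inner (f j (node J (j - 1))) (g j (node J (j - 1))))"

definition ipS :: "bool \<Rightarrow> nat \<Rightarrow> (nat \<Rightarrow> real \<Rightarrow> 'a::real_inner) \<Rightarrow> (nat \<Rightarrow> real \<Rightarrow> 'a) \<Rightarrow> real" where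
  "ipS lumped J f g = (if lumped then ipL J f g else ipE J f g)"

definition boundary_partition :: "bool \<Rightarrow> real set \<Rightarrow> real set \<Rightarrow> real set \<Rightarrow> real set \<Rightarrow> bool" where
  "boundary_partition periodic DD D0 D1 D2 =
     (if periodic then DD = {} \<and> D0 = {} \<and> D1 = {} \<and> D2 = {}
      else DD \<union> D0 \<union> D1 \<union> D2 = {0, 1} \<and> DD \<inter> D0 = {} \<and> DD \<inter> D1 = {} \<and> DD \<inter> D2 = {}
           \<and> D0 \<inter> D1 = {} \<and> D0 \<inter> D2 = {} \<and> D1 \<inter> D2 = {})"

definition Vh :: "bool \<Rightarrow> nat \<Rightarrow> (nat \<Rightarrow> 'a) set" where
  "Vh periodic J = {f. periodic \<longrightarrow> f J = f 0}"

definition Vd0 :: "bool \<Rightarrow> nat \<Rightarrow> real set \<Rightarrow> (nat \<Rightarrow> vec) set" where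
  "Vd0 periodic J D0 = {X \<in> Vh periodic J. \<forall>p \<in> D0. inner (fun_of J X p) e1 = 0}"

definition Vd :: "bool \<Rightarrow> nat \<Rightarrow> real set \<Rightarrow> real set \<Rightarrow> real set \<Rightarrow> real set \<Rightarrow> (nat \<Rightarrow> vec) set" where
  "Vd periodic J DD D0 D1 D2 = {\<eta> \<in> Vd0 periodic J D0.
      (\<forall>p \<in> D1. inner (fun_of J \<eta> p) e1 = 0) \<and> (\<forall>p \<in> D2. inner (fun_of J \<eta> p) e2 = 0)
      \<and> (\<forall>p \<in> DD. fun_of J \<eta> p = 0)}"

definition Wd0 :: "bool \<Rightarrow> nat \<Rightarrow> real set \<Rightarrow> (nat \<Rightarrow> real) set" where
  "Wd0 periodic J D0 = {c \<in> Vh periodic J. \<forall>p \<in> D0. fun_of J c p = 0}"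

definition Wsharp :: "bool \<Rightarrow> bool \<Rightarrow> nat \<Rightarrow> real set \<Rightarrow> (nat \<Rightarrow> real) set" where
  "Wsharp lumped periodic J D0 = (if lumped then Wd0 periodic J D0 else Vh periodic J)"

definition x1 :: "nat \<Rightarrow> (nat \<Rightarrow> vec) \<Rightarrow> nat \<Rightarrow> real \<Rightarrow> real" where
  "x1 J X j \<rho> = inner (loc J X j \<rho>) e1"

definition absd :: "nat \<Rightarrow> (nat \<Rightarrow> vec) \<Rightarrow> nat \<Rightarrow> real \<Rightarrow> real" where
  "absd J X j \<rho> = norm (dloc J X j \<rho>)"

definition nu :: "nat \<Rightarrow> (nat \<Rightarrow> vec) \<Rightarrow> nat \<Rightarrow> real \<Rightarrow> vec" where
  "nu J X j \<rho> = - ((1 / norm (dloc J X j \<rho>)) *\<^sub>R perp (dloc J X j \<rho>))"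

definition assumptionA :: "nat \<Rightarrow> real set \<Rightarrow> (nat \<Rightarrow> vec) \<Rightarrow> bool" where
  "assumptionA J D0 X =
     ((\<forall>j \<in> {1..J}. \<forall>\<rho> \<in> {node J (j - 1) <..< node J j}. norm (dloc J X j \<rho>) > 0)
      \<and> (\<forall>\<rho> \<in> {0..1} - D0. inner (fun_of J X \<rho>) e1 > 0))"

text \<open>B^m(eta), with Xm = X^m and Xn = X^(m+1).\<close>
definition Bm :: "nat \<Rightarrow> (real \<Rightarrow> real) \<Rightarrow> real set \<Rightarrow> real set \<Rightarrow> (nat \<Rightarrow> vec) \<Rightarrow> (nat \<Rightarrow> vec)
      \<Rightarrow> (nat \<Rightarrow> vec) \<Rightarrow> real" where
  "Bm J rho D1 D2 Xm Xn \<eta> =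
     - (\<Sum>p \<in> D1. rho p * inner (fun_of J Xm p) e1 * inner (fun_of J \<eta> p) e2)
     - (\<Sum>p \<in> D2. inner (pos_part (rho p) *\<^sub>R fun_of J Xn p + neg_part (rho p) *\<^sub>R fun_of J Xm p) e1
                   * inner (fun_of J \<eta> p) e1)"

definition energy :: "nat \<Rightarrow> (real \<Rightarrow> real) \<Rightarrow> real set \<Rightarrow> real set \<Rightarrow> (nat \<Rightarrow> vec) \<Rightarrow> real" where
  "energy J rho D1 D2 X =
     2 * pi * ipE J (x1 J X) (absd J X)
     + 2 * pi * (\<Sum>p \<in> D1. rho p * inner (fun_of J X p) e1 * inner (fun_of J X p) e2)
     + pi * (\<Sum>p \<in> D2. rho p * (inner (fun_of J X p) e1)\<^sup>2)"

end

theory Submission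
  imports Defs
begin

text \<open>Testing the curvature equation with \<open>\<chi> = \<kappa>\<^sup>m\<^sup>+\<^sup>1\<close> and the position equation with
  \<open>\<eta> = \<delta>X\<^sup>m\<^sup>+\<^sup>1\<close> turns the normal-velocity terms of both equations into the same quantity,
  \<open>\<Delta>t\<^sub>m\<close> times the weighted variance of the curvature.  What remains of the position equation
  bounds the energy decrease: on every element, convexity of the length gives
  \<open>|a| - |b| \<le> a \<cdot> (a - b) / |b|\<close>, so the surface area of \<open>X\<^sup>m\<^sup>+\<^sup>1\<close> is dominated by the
  linearisation appearing in the equation, while the semi-implicit treatment of the contact
  terms makes the boundary part of \<open>B\<^sup>m\<close> dissipative.  Finally the variance is nonnegative by
  Cauchy--Schwarz for the (possibly lumped) weighted product; in the lumped case this uses that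
  the trapezoidal rule is exact for the affine weight \<open>X\<^sup>m \<cdot> e\<^sub>1 |X\<^sup>m\<^sub>\<rho>|\<close>, so the normalising
  denominator is the same for both variants.\<close>

lemma node_diff: "0 < J \<Longrightarrow> 1 \<le> j \<Longrightarrow> node J j - node J (j - 1) = 1 / real J"
  unfolding node_def by (simp add: of_nat_diff field_simps)

lemma node_less: "0 < J \<Longrightarrow> 1 \<le> j \<Longrightarrow> node J (j - 1) < node J j"
  using node_diff[of J j] by (simp add: algebra_simps)

lemma node_in_unit_interval: "0 < J \<Longrightarrow> j \<le> J \<Longrightarrow> node J j \<in> {0..1}"
  unfolding node_def by (simp add: field_simps)

lemma loc_add: "loc J (\<lambda>i. f i + g i) j \<rho> = loc J f j \<rho> + loc J g j \<rho>"
  unfolding loc_def by (simp add: algebra_simps)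

lemma dloc_add: "dloc J (\<lambda>i. f i + g i) j \<rho> = dloc J f j \<rho> + dloc J g j \<rho>"
  unfolding dloc_def by (simp add: algebra_simps)

lemma fun_of_add: "fun_of J (\<lambda>i. f i + g i) \<rho> = fun_of J f \<rho> + fun_of J g \<rho>"
  unfolding fun_of_def by (rule loc_add)

lemma dloc_independent: "dloc J X j \<rho> = dloc J X j \<sigma>"
  unfolding dloc_def ..

lemma fun_of_node:
  assumes "0 < J" "j \<le> J"
  shows "fun_of J f (node J j) = f j"
proof (cases "j = 0")
  case True
  then show ?thesis unfolding fun_of_def elem_def loc_def node_def by simp
next
  case False
  with assms have "0 < node J j" "nat \<lceil>node J j * real J\<rceil> = j"
    unfolding node_def by simp_all
  with assms have "elem J (node J j) = j"
    unfolding elem_def by simp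
  moreover have "(node J j - node J (j - 1)) * real J = 1"
    using node_diff[of J j] False assms by simp
  ultimately show ?thesis unfolding fun_of_def loc_def by simp
qed

lemma loc_convex_combination:
  assumes "0 < J" "1 \<le> j" "\<rho> \<in> {node J (j - 1) .. node J j}"
  obtains t where "t \<in> {0..1}" "loc J f j \<rho> = (1 - t) *\<^sub>R f (j - 1) + t *\<^sub>R f j"
proof
  define t where "t = (\<rho> - node J (j - 1)) * real J"
  have "t \<le> (node J j - node J (j - 1)) * real J"
    unfolding t_def using assms by (intro mult_right_mono) auto
  also have "\<dots> = 1"
    using assms node_diff[of J j] by simp
  finally show "t \<in> {0..1}"
    using assms unfolding t_def by simp
  show "loc J f j \<rho> = (1 - t) *\<^sub>R f (j - 1) + t *\<^sub>R f j"
    unfolding loc_def t_def by (simp add: algebra_simps)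
qed

lemma continuous_on_loc [continuous_intros]:
  fixes X :: "nat \<Rightarrow> 'a::real_normed_vector"
  shows "continuous_on S (\<lambda>\<rho>. loc J X j \<rho>)"
  unfolding loc_def by (intro continuous_intros)

lemma continuous_on_dloc [continuous_intros]:
  fixes X :: "nat \<Rightarrow> 'a::real_normed_vector"
  shows "continuous_on S (\<lambda>\<rho>. dloc J X j \<rho>)"
  unfolding dloc_def by (intro continuous_intros)

lemma continuous_on_x1 [continuous_intros]: "continuous_on S (\<lambda>\<rho>. x1 J X j \<rho>)"
  unfolding x1_def by (intro continuous_intros)

lemma continuous_on_absd [continuous_intros]: "continuous_on S (\<lambda>\<rho>. absd J X j \<rho>)"
  unfolding absd_def by (intro continuous_intros)

lemma continuous_on_nu [continuous_intros]: "continuous_on S (\<lambda>\<rho>. nu J X j \<rho>)"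
  unfolding nu_def dloc_def by simp

definition quadS :: "bool \<Rightarrow> nat \<Rightarrow> (nat \<Rightarrow> real \<Rightarrow> real) \<Rightarrow> real" where
  "quadS lumped J \<phi> = ipS lumped J \<phi> (\<lambda>_ _. 1)"

definition elementwise_continuous :: "nat \<Rightarrow> (nat \<Rightarrow> real \<Rightarrow> real) \<Rightarrow> bool" where
  "elementwise_continuous J \<phi> \<longleftrightarrow> (\<forall>j \<in> {1..J}. continuous_on {node J (j - 1) .. node J j} (\<phi> j))"

lemma quadS_lumped:
  "quadS True J \<phi> = ((1 / real J) / 2) * (\<Sum>j = 1..J. \<phi> j (node J j) + \<phi> j (node J (j - 1)))"
  unfolding quadS_def ipS_def ipL_def by simp

lemma quadS_exact: "quadS False J \<phi> = (\<Sum>j = 1..J. integral {node J (j - 1) .. node J j} (\<phi> j))"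
  unfolding quadS_def ipS_def ipE_def by simp

lemma ipS_eq_quadS: "ipS lumped J f g = quadS lumped J (\<lambda>j \<rho>. inner (f j \<rho>) (g j \<rho>))"
  unfolding quadS_def ipS_def ipL_def ipE_def by simp

lemma ipE_eq_quadS: "ipE J f g = quadS False J (\<lambda>j \<rho>. inner (f j \<rho>) (g j \<rho>))"
  unfolding quadS_exact ipE_def ..

lemma quadS_cong:
  assumes "0 < J"
    and "\<And>j \<rho>. j \<in> {1..J} \<Longrightarrow> \<rho> \<in> {node J (j - 1) .. node J j} \<Longrightarrow> \<phi> j \<rho> = \<psi> j \<rho>"
  shows "quadS lumped J \<phi> = quadS lumped J \<psi>"
  using assms node_less[OF assms(1)]
  by (cases lumped) (auto simp: quadS_lumped quadS_exact less_imp_le intro!: sum.cong integral_cong)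

lemma quadS_add:
  assumes "elementwise_continuous J \<phi>" "elementwise_continuous J \<psi>"
  shows "quadS lumped J (\<lambda>j \<rho>. \<phi> j \<rho> + \<psi> j \<rho>) = quadS lumped J \<phi> + quadS lumped J \<psi>"
proof (cases lumped)
  case True
  then show ?thesis by (simp add: quadS_lumped sum.distrib algebra_simps)
next
  case False
  with assms show ?thesis unfolding elementwise_continuous_def
    by (auto simp: quadS_exact sum.distrib[symmetric]
      intro!: sum.cong integral_add integrable_continuous_interval)
qed

lemma quadS_scale:
  assumes "elementwise_continuous J \<phi>"
  shows "quadS lumped J (\<lambda>j \<rho>. c * \<phi> j \<rho>) = c * quadS lumped J \<phi>"
proof (cases lumped)
  case True
  then show ?thesis by (simp add: quadS_lumped sum_distrib_left algebra_simps)
next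
  case False
  with assms show ?thesis unfolding elementwise_continuous_def
    by (auto simp: quadS_exact sum_distrib_left intro!: sum.cong integrable_continuous_interval)
qed

lemma quadS_nonneg:
  assumes "0 < J" "elementwise_continuous J \<phi>"
    and "\<And>j \<rho>. j \<in> {1..J} \<Longrightarrow> \<rho> \<in> {node J (j - 1) .. node J j} \<Longrightarrow> 0 \<le> \<phi> j \<rho>"
  shows "0 \<le> quadS lumped J \<phi>"
proof (cases lumped)
  case True
  have "0 \<le> (\<Sum>j = 1..J. \<phi> j (node J j) + \<phi> j (node J (j - 1)))"
    using node_less[OF assms(1)]
    by (intro sum_nonneg add_nonneg_nonneg assms(3)) (auto simp: less_imp_le)
  with True show ?thesis by (simp add: quadS_lumped)
next
  case False
  with assms node_less[OF assms(1)] show ?thesis unfolding elementwise_continuous_def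
    by (auto simp: quadS_exact less_imp_le
      intro!: sum_nonneg integral_nonneg integrable_continuous_interval)
qed

lemma quadS_mono:
  assumes "0 < J" "elementwise_continuous J \<phi>" "elementwise_continuous J \<psi>"
    and "\<And>j \<rho>. j \<in> {1..J} \<Longrightarrow> \<rho> \<in> {node J (j - 1) .. node J j} \<Longrightarrow> \<phi> j \<rho> \<le> \<psi> j \<rho>"
  shows "quadS lumped J \<phi> \<le> quadS lumped J \<psi>"
proof -
  have neg: "elementwise_continuous J (\<lambda>j \<rho>. (- 1) * \<phi> j \<rho>)"
    using assms(2) unfolding elementwise_continuous_def by (auto intro!: continuous_intros)
  have "elementwise_continuous J (\<lambda>j \<rho>. \<psi> j \<rho> + (- 1) * \<phi> j \<rho>)"
    using assms(2,3) unfolding elementwise_continuous_def by (auto intro!: continuous_intros)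
  then have "0 \<le> quadS lumped J (\<lambda>j \<rho>. \<psi> j \<rho> + (- 1) * \<phi> j \<rho>)"
    using assms(1,4) by (intro quadS_nonneg) auto
  also have "\<dots> = quadS lumped J \<psi> - quadS lumped J \<phi>"
    by (simp only: quadS_add[OF assms(3) neg] quadS_scale[OF assms(2)])
  finally show ?thesis by simp
qed

lemma integral_affine_trapezoid:
  fixes a b \<alpha> \<beta> :: real
  assumes "a \<le> b"
  shows "integral {a..b} (\<lambda>\<rho>. \<alpha> + (\<rho> - a) * \<beta>) = (b - a) / 2 * ((\<alpha> + (b - a) * \<beta>) + \<alpha>)"
proof -
  define F where "F \<rho> = \<alpha> * \<rho> + (\<rho> - a)\<^sup>2 * \<beta> / 2" for \<rho> :: real
  have "((\<lambda>\<rho>. \<alpha> + (\<rho> - a) * \<beta>) has_integral (F b - F a)) {a..b}"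
    using assms unfolding F_def
    by (intro fundamental_theorem_of_calculus)
      (auto intro!: derivative_eq_intros
        simp: has_real_derivative_iff_has_vector_derivative[symmetric] field_simps)
  then show ?thesis
    unfolding F_def by (simp add: integral_unique power2_eq_square field_simps)
qed

lemma quadS_lumped_eq_exact_if_affine:
  assumes "0 < J" "\<And>j \<rho>. j \<in> {1..J} \<Longrightarrow> \<phi> j \<rho> = \<alpha> j + (\<rho> - node J (j - 1)) * \<beta> j"
  shows "quadS True J \<phi> = quadS False J \<phi>"
proof -
  have "integral {node J (j - 1) .. node J j} (\<phi> j)
      = ((1 / real J) / 2) * (\<phi> j (node J j) + \<phi> j (node J (j - 1)))" if "j \<in> {1..J}" for j
  proof -
    have "integral {node J (j - 1) .. node J j} (\<phi> j)
        = integral {node J (j - 1) .. node J j} (\<lambda>\<rho>. \<alpha> j + (\<rho> - node J (j - 1)) * \<beta> j)"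
      using assms(2)[OF that] by (intro integral_cong) simp
    also have "\<dots> = (1 / real J) / 2 * ((\<alpha> j + (1 / real J) * \<beta> j) + \<alpha> j)"
      using that node_less[OF assms(1), of j] node_diff[OF assms(1), of j]
      by (simp add: integral_affine_trapezoid)
    finally show ?thesis
      using that assms(2)[OF that] node_diff[OF assms(1), of j] by simp
  qed
  then show ?thesis
    unfolding quadS_lumped quadS_exact by (simp add: sum_distrib_left)
qed

lemma norm_diff_le_inner_div:
  fixes a b :: "'a::real_inner"
  assumes "0 < norm b"
  shows "norm a - norm b \<le> inner a (a - b) / norm b"
proof -
  have "0 \<le> (norm a - norm b)\<^sup>2" "inner a a = norm a * norm a"
    by (simp_all add: power2_norm_eq_inner[symmetric] power2_eq_square)
  then have "norm a * norm b - norm b * norm b \<le> inner a a - inner a b"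
    using norm_cauchy_schwarz[of a b] by (simp add: power2_eq_square algebra_simps)
  with assms show ?thesis by (simp add: inner_diff_right field_simps)
qed

text \<open>The upwind choice of \<open>X\<^sup>m\<^sup>+\<^sup>1\<close> or \<open>X\<^sup>m\<close> according to the sign of \<open>\<varrho>\<close> leaves the
  remainder \<open>|\<varrho>| d\<^sup>2 / 2 \<ge> 0\<close>.\<close>

lemma upwind_square_diff_bound:
  fixes r a d :: real
  shows "- ((pos_part r * (a + d) + neg_part r * a) * d) \<le> (r * a\<^sup>2 - r * (a + d)\<^sup>2) / 2"
proof (cases "0 \<le> r")
  case True
  then have "(r * a\<^sup>2 - r * (a + d)\<^sup>2) / 2 + (pos_part r * (a + d) + neg_part r * a) * d = r * d\<^sup>2 / 2"
    unfolding pos_part_def neg_part_def by (simp add: power2_eq_square field_simps)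
  moreover have "0 \<le> r * d\<^sup>2 / 2" using True by simp
  ultimately show ?thesis by linarith
next
  case False
  then have "(r * a\<^sup>2 - r * (a + d)\<^sup>2) / 2 + (pos_part r * (a + d) + neg_part r * a) * d = - r * d\<^sup>2 / 2"
    unfolding pos_part_def neg_part_def by (simp add: power2_eq_square field_simps)
  moreover have "0 \<le> - r * d\<^sup>2 / 2" using False by (simp add: mult_nonpos_nonneg)
  ultimately show ?thesis by linarith
qed

lemma discriminant_bound:
  fixes S A L :: real
  assumes "\<And>t. 0 \<le> S - 2 * t * A + t\<^sup>2 * L"
  shows "A\<^sup>2 / L \<le> S"
proof (cases "L = 0")
  case True
  then show ?thesis using assms[of 0] by simp
next
  case False
  then have "S - 2 * (A / L) * A + (A / L)\<^sup>2 * L = S - A\<^sup>2 / L"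
    by (simp add: power2_eq_square field_simps)
  then show ?thesis using assms[of "A / L"] by simp
qed

lemma quadS_cauchy_schwarz:
  assumes "0 < J" "elementwise_continuous J w" "elementwise_continuous J k"
    and "\<And>j \<rho>. j \<in> {1..J} \<Longrightarrow> \<rho> \<in> {node J (j - 1) .. node J j} \<Longrightarrow> 0 \<le> w j \<rho>"
  shows "(quadS lumped J (\<lambda>j \<rho>. w j \<rho> * k j \<rho>))\<^sup>2 / quadS lumped J w
      \<le> quadS lumped J (\<lambda>j \<rho>. w j \<rho> * (k j \<rho>)\<^sup>2)"
proof (rule discriminant_bound)
  fix t
  define wk wk2 where "wk j \<rho> = w j \<rho> * k j \<rho>" and "wk2 j \<rho> = w j \<rho> * (k j \<rho>)\<^sup>2" for j \<rho>
  have cont: "elementwise_continuous J wk" "elementwise_continuous J wk2"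
    "elementwise_continuous J (\<lambda>j \<rho>. (- 2 * t) * wk j \<rho>)"
    "elementwise_continuous J (\<lambda>j \<rho>. t\<^sup>2 * w j \<rho>)"
    "elementwise_continuous J (\<lambda>j \<rho>. wk2 j \<rho> + (- 2 * t) * wk j \<rho>)"
    using assms(2,3) unfolding elementwise_continuous_def wk_def wk2_def
    by (auto intro!: continuous_intros)
  have "0 \<le> quadS lumped J (\<lambda>j \<rho>. w j \<rho> * (k j \<rho> - t)\<^sup>2)"
    using assms(2,3,4)
    by (intro quadS_nonneg[OF assms(1)]) (auto simp: elementwise_continuous_def intro!: continuous_intros)
  also have "\<dots> = quadS lumped J (\<lambda>j \<rho>. (wk2 j \<rho> + (- 2 * t) * wk j \<rho>) + t\<^sup>2 * w j \<rho>)"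
    unfolding wk_def wk2_def by (intro quadS_cong[OF assms(1)]) (simp add: power2_eq_square algebra_simps)
  also have "\<dots> = quadS lumped J wk2 - 2 * t * quadS lumped J wk + t\<^sup>2 * quadS lumped J w"
    by (simp only: quadS_add[OF cont(5,4)] quadS_add[OF cont(2,3)] quadS_scale[OF cont(1)]
        quadS_scale[OF assms(2)])
  finally show "0 \<le> quadS lumped J wk2 - 2 * t * quadS lumped J wk + t\<^sup>2 * quadS lumped J w" .
qed

lemma x1_nonneg:
  assumes "X \<in> Vd0 periodic J D0" "assumptionA J D0 X" "0 < J"
    and "j \<in> {1..J}" "\<rho> \<in> {node J (j - 1) .. node J j}"
  shows "0 \<le> x1 J X j \<rho>"
proof -
  have at_nodes: "0 \<le> inner (X i) e1" if "i \<le> J" for i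
  proof (cases "node J i \<in> D0")
    case True
    then show ?thesis
      using assms(1) fun_of_node[OF assms(3) that, of X] unfolding Vd0_def by force
  next
    case False
    then show ?thesis
      using assms(2) fun_of_node[OF assms(3) that] node_in_unit_interval[OF assms(3) that]
      unfolding assumptionA_def by (metis DiffI less_imp_le)
  qed
  obtain t where "t \<in> {0..1}" "loc J X j \<rho> = (1 - t) *\<^sub>R X (j - 1) + t *\<^sub>R X j"
    using loc_convex_combination assms(3-5) by (metis atLeastAtMost_iff)
  then show ?thesis
    unfolding x1_def using at_nodes[of j] at_nodes[of "j - 1"] assms(4)
    by (auto simp: inner_add_left)
qed

lemma absd_pos:
  assumes "assumptionA J D0 X" "0 < J" "j \<in> {1..J}"
  shows "0 < absd J X j \<rho>"
proof -
  define m where "m = (node J (j - 1) + node J j) / 2"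
  have "m \<in> {node J (j - 1) <..< node J j}"
    using node_less[OF assms(2), of j] assms(3) unfolding m_def by auto
  then have "0 < norm (dloc J X j m)" using assms unfolding assumptionA_def by blast
  then show ?thesis unfolding absd_def by (metis dloc_independent)
qed

lemma ipE_x1_absd_eq_quadS:
  assumes "0 < J"
  shows "ipE J (x1 J X) (absd J X) = quadS lumped J (\<lambda>j \<rho>. x1 J X j \<rho> * absd J X j \<rho>)"
proof -
  have "x1 J X j \<rho> * absd J X j \<rho>
      = inner (X (j - 1)) e1 * absd J X j 0
        + (\<rho> - node J (j - 1)) * (real J * inner (X j - X (j - 1)) e1 * absd J X j 0)" for j \<rho>
    unfolding x1_def loc_def absd_def
    by (subst dloc_independent) (simp add: inner_add_left algebra_simps)
  then show ?thesis
    unfolding ipE_eq_quadS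
    by (cases lumped) (simp_all add: quadS_lumped_eq_exact_if_affine[OF assms])
qed

lemma ipS_curvature_variance_nonneg:
  assumes "X \<in> Vd0 periodic J D0" "assumptionA J D0 X" "0 < J"
  shows "(ipS lumped J (x1 J X) (\<lambda>j \<rho>. loc J \<kappa> j \<rho> * absd J X j \<rho>))\<^sup>2 / ipE J (x1 J X) (absd J X)
      \<le> ipS lumped J (\<lambda>j \<rho>. x1 J X j \<rho> * (loc J \<kappa> j \<rho>)\<^sup>2) (absd J X)"
proof -
  define w where "w j \<rho> = x1 J X j \<rho> * absd J X j \<rho>" for j \<rho>
  have "(quadS lumped J (\<lambda>j \<rho>. w j \<rho> * loc J \<kappa> j \<rho>))\<^sup>2 / quadS lumped J w
      \<le> quadS lumped J (\<lambda>j \<rho>. w j \<rho> * (loc J \<kappa> j \<rho>)\<^sup>2)"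
    using x1_nonneg[OF assms] absd_pos[OF assms(2,3)] unfolding w_def
    by (intro quadS_cauchy_schwarz[OF assms(3)])
      (auto simp: elementwise_continuous_def less_imp_le intro!: continuous_intros)
  then show ?thesis
    unfolding ipS_eq_quadS ipE_x1_absd_eq_quadS[OF assms(3), of X lumped] w_def
    by (simp add: algebra_simps)
qed

lemma ipS_displacement_normal:
  assumes "dt \<noteq> 0"
  shows "ipS lumped J (\<lambda>j \<rho>. (x1 J X j \<rho> * loc J \<kappa> j \<rho>) *\<^sub>R nu J X j \<rho>)
        (\<lambda>j \<rho>. absd J X j \<rho> *\<^sub>R loc J dX j \<rho>)
    = dt * ipS lumped J
        (\<lambda>j \<rho>. x1 J X j \<rho> *\<^sub>R ((1 / dt) *\<^sub>R (loc J (\<lambda>i. X i + dX i) j \<rho> - loc J X j \<rho>)))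
        (\<lambda>j \<rho>. (loc J \<kappa> j \<rho> * absd J X j \<rho>) *\<^sub>R nu J X j \<rho>)"
proof -
  have "elementwise_continuous J (\<lambda>j \<rho>. inner
      (x1 J X j \<rho> *\<^sub>R ((1 / dt) *\<^sub>R (loc J (\<lambda>i. X i + dX i) j \<rho> - loc J X j \<rho>)))
      ((loc J \<kappa> j \<rho> * absd J X j \<rho>) *\<^sub>R nu J X j \<rho>))"
    using assms unfolding elementwise_continuous_def by (auto intro!: continuous_intros)
  with assms show ?thesis
    unfolding ipS_eq_quadS by (simp add: quadS_scale[symmetric] loc_add inner_commute mult_ac)
qed

lemma surface_area_le_linearisation:
  assumes "X \<in> Vd0 periodic J D0" "assumptionA J D0 X" "0 < J"
  shows "ipE J (x1 J (\<lambda>i. X i + dX i)) (absd J (\<lambda>i. X i + dX i))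
    \<le> ipE J (x1 J X) (absd J X)
      + ipE J (\<lambda>j \<rho>. inner (loc J dX j \<rho>) e1) (absd J (\<lambda>i. X i + dX i))
      + ipE J (\<lambda>j \<rho>. x1 J X j \<rho> *\<^sub>R dloc J (\<lambda>i. X i + dX i) j \<rho>)
          (\<lambda>j \<rho>. inverse (absd J X j \<rho>) *\<^sub>R dloc J dX j \<rho>)"
proof -
  define Y where "Y i = X i + dX i" for i
  define area area_lin1 area_lin2 where
    "area j \<rho> = inner (x1 J X j \<rho>) (absd J X j \<rho>)" and
    "area_lin1 j \<rho> = inner (inner (loc J dX j \<rho>) e1) (absd J Y j \<rho>)" and
    "area_lin2 j \<rho> = inner (x1 J X j \<rho> *\<^sub>R dloc J Y j \<rho>) (inverse (absd J X j \<rho>) *\<^sub>R dloc J dX j \<rho>)"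
    for j \<rho>
  have cont: "elementwise_continuous J area" "elementwise_continuous J area_lin1"
    "elementwise_continuous J area_lin2"
    "elementwise_continuous J (\<lambda>j \<rho>. area j \<rho> + area_lin1 j \<rho>)"
    "elementwise_continuous J (\<lambda>j \<rho>. (area j \<rho> + area_lin1 j \<rho>) + area_lin2 j \<rho>)"
    "elementwise_continuous J (\<lambda>j \<rho>. inner (x1 J Y j \<rho>) (absd J Y j \<rho>))"
    unfolding elementwise_continuous_def area_def area_lin1_def area_lin2_def absd_def dloc_def
    by (auto intro!: continuous_intros)
  have "inner (x1 J Y j \<rho>) (absd J Y j \<rho>) \<le> (area j \<rho> + area_lin1 j \<rho>) + area_lin2 j \<rho>"
    if "j \<in> {1..J}" "\<rho> \<in> {node J (j - 1) .. node J j}" for j \<rho>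
  proof -
    have "norm (dloc J Y j \<rho>) - norm (dloc J X j \<rho>)
        \<le> inner (dloc J Y j \<rho>) (dloc J dX j \<rho>) / norm (dloc J X j \<rho>)"
      using norm_diff_le_inner_div[of "dloc J X j \<rho>" "dloc J Y j \<rho>"] absd_pos[OF assms(2,3) that(1)]
      unfolding absd_def Y_def dloc_add by simp
    then have "x1 J X j \<rho> * (norm (dloc J Y j \<rho>) - norm (dloc J X j \<rho>))
        \<le> x1 J X j \<rho> * (inner (dloc J Y j \<rho>) (dloc J dX j \<rho>) / norm (dloc J X j \<rho>))"
      using x1_nonneg[OF assms that] by (rule mult_left_mono)
    then show ?thesis
      unfolding area_def area_lin1_def area_lin2_def absd_def Y_def x1_def loc_add
      by (simp add: inner_add_left divide_inverse algebra_simps)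
  qed
  then have "quadS False J (\<lambda>j \<rho>. inner (x1 J Y j \<rho>) (absd J Y j \<rho>))
      \<le> quadS False J (\<lambda>j \<rho>. (area j \<rho> + area_lin1 j \<rho>) + area_lin2 j \<rho>)"
    by (intro quadS_mono[OF assms(3) cont(6,5)])
  then show ?thesis
    unfolding ipE_eq_quadS Y_def[symmetric] quadS_add[OF cont(4,3)] quadS_add[OF cont(1,2)]
    unfolding area_def area_lin1_def area_lin2_def .
qed

lemma energy_diff_ge_Bm:
  assumes "\<forall>p \<in> D1. inner (fun_of J dX p) e1 = 0"
  shows "ipE J (x1 J X) (absd J X) - ipE J (x1 J (\<lambda>i. X i + dX i)) (absd J (\<lambda>i. X i + dX i))
      + Bm J rho D1 D2 X (\<lambda>i. X i + dX i) dX
    \<le> (energy J rho D1 D2 X - energy J rho D1 D2 (\<lambda>i. X i + dX i)) / (2 * pi)"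
proof -
  define Y where "Y i = X i + dX i" for i
  define bdry1 bdry2 where
    "bdry1 Z p = rho p * inner (fun_of J Z p) e1 * inner (fun_of J Z p) e2" and
    "bdry2 Z p = rho p * (inner (fun_of J Z p) e1)\<^sup>2" for Z p
  have Y: "fun_of J Y p = fun_of J X p + fun_of J dX p" for p
    unfolding Y_def fun_of_add ..
  have split: "(energy J rho D1 D2 X - energy J rho D1 D2 Y) / (2 * pi)
      = ipE J (x1 J X) (absd J X) - ipE J (x1 J Y) (absd J Y)
        + (\<Sum>p\<in>D1. bdry1 X p - bdry1 Y p) + (\<Sum>p\<in>D2. (bdry2 X p - bdry2 Y p) / 2)"
    unfolding energy_def bdry1_def bdry2_def sum_subtractf sum_divide_distrib[symmetric]
    by (simp add: field_simps)
  have "(\<Sum>p\<in>D1. bdry1 X p - bdry1 Y p)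
      = - (\<Sum>p\<in>D1. rho p * inner (fun_of J X p) e1 * inner (fun_of J dX p) e2)"
    unfolding sum_negf[symmetric] using assms
    by (intro sum.cong) (auto simp: bdry1_def Y inner_add_left algebra_simps)
  moreover have "- (\<Sum>p\<in>D2. inner (pos_part (rho p) *\<^sub>R fun_of J Y p + neg_part (rho p) *\<^sub>R fun_of J X p) e1
        * inner (fun_of J dX p) e1)
      \<le> (\<Sum>p\<in>D2. (bdry2 X p - bdry2 Y p) / 2)"
    unfolding sum_negf[symmetric] bdry2_def
    using upwind_square_diff_bound[of "rho _" "inner (fun_of J X _) e1" "inner (fun_of J dX _) e1"]
    by (intro sum_mono) (simp add: Y inner_add_left algebra_simps)
  ultimately show ?thesis
    unfolding Y_def[symmetric] split Bm_def by linarith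
qed

theorem mainTheorem11:
  fixes lumped periodic :: bool and J :: nat and DD D0 D1 D2 :: "real set"
    and rho :: "real \<Rightarrow> real" and Xm dX :: "nat \<Rightarrow> vec" and kappa :: "nat \<Rightarrow> real" and dt :: real
  assumes "J \<ge> 3"
    and "boundary_partition periodic DD D0 D1 D2"
    and "\<forall>p \<in> {0, 1}. \<bar>rho p\<bar> \<le> 1"
    and "Xm \<in> Vd0 periodic J D0"
    and "assumptionA J D0 Xm"
    and "dt > 0"
    and "dX \<in> Vd periodic J DD D0 D1 D2"
    and "kappa \<in> Wsharp lumped periodic J D0"
    and "\<forall>c \<in> Wsharp lumped periodic J D0.
           ipS lumped J (\<lambda>j \<rho>. x1 J Xm j \<rho> *\<^sub>R ((1 / dt) *\<^sub>R (loc J (\<lambda>i. Xm i + dX i) j \<rho> - loc J Xm j \<rho>)))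
                        (\<lambda>j \<rho>. (loc J c j \<rho> * absd J Xm j \<rho>) *\<^sub>R nu J Xm j \<rho>)
         = ipS lumped J (\<lambda>j \<rho>. x1 J Xm j \<rho> * loc J kappa j \<rho>) (\<lambda>j \<rho>. loc J c j \<rho> * absd J Xm j \<rho>)
           - ipS lumped J (x1 J Xm) (\<lambda>j \<rho>. loc J kappa j \<rho> * absd J Xm j \<rho>) / ipE J (x1 J Xm) (absd J Xm)
             * ipS lumped J (x1 J Xm) (\<lambda>j \<rho>. loc J c j \<rho> * absd J Xm j \<rho>)"
    and "\<forall>\<eta> \<in> Vd periodic J DD D0 D1 D2.
           ipS lumped J (\<lambda>j \<rho>. (x1 J Xm j \<rho> * loc J kappa j \<rho>) *\<^sub>R nu J Xm j \<rho>)
                        (\<lambda>j \<rho>. absd J Xm j \<rho> *\<^sub>R loc J \<eta> j \<rho>)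
           + ipE J (\<lambda>j \<rho>. inner (loc J \<eta> j \<rho>) e1) (absd J (\<lambda>i. Xm i + dX i))
           + ipE J (\<lambda>j \<rho>. x1 J Xm j \<rho> *\<^sub>R dloc J (\<lambda>i. Xm i + dX i) j \<rho>)
                   (\<lambda>j \<rho>. inverse (absd J Xm j \<rho>) *\<^sub>R dloc J \<eta> j \<rho>)
         = Bm J rho D1 D2 Xm (\<lambda>i. Xm i + dX i) \<eta>"
  shows "(energy J rho D1 D2 Xm - energy J rho D1 D2 (\<lambda>i. Xm i + dX i)) / (2 * pi)
           \<ge> dt * (ipS lumped J (\<lambda>j \<rho>. x1 J Xm j \<rho> * (loc J kappa j \<rho>)\<^sup>2) (absd J Xm)
                   - (ipS lumped J (x1 J Xm) (\<lambda>j \<rho>. loc J kappa j \<rho> * absd J Xm j \<rho>))\<^sup>2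
                     / ipE J (x1 J Xm) (absd J Xm))
         \<and> dt * (ipS lumped J (\<lambda>j \<rho>. x1 J Xm j \<rho> * (loc J kappa j \<rho>)\<^sup>2) (absd J Xm)
                   - (ipS lumped J (x1 J Xm) (\<lambda>j \<rho>. loc J kappa j \<rho> * absd J Xm j \<rho>))\<^sup>2
                     / ipE J (x1 J Xm) (absd J Xm)) \<ge> 0"
proof -
  have J: "0 < J" using assms(1) by simp
  define S A L where
    "S = ipS lumped J (\<lambda>j \<rho>. x1 J Xm j \<rho> * (loc J kappa j \<rho>)\<^sup>2) (absd J Xm)" and
    "A = ipS lumped J (x1 J Xm) (\<lambda>j \<rho>. loc J kappa j \<rho> * absd J Xm j \<rho>)" and
    "L = ipE J (x1 J Xm) (absd J Xm)"
  have variance: "A\<^sup>2 / L \<le> S"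
    unfolding S_def A_def L_def by (rule ipS_curvature_variance_nonneg[OF assms(4,5) J])
  have "ipS lumped J (\<lambda>j \<rho>. x1 J Xm j \<rho> * loc J kappa j \<rho>) (\<lambda>j \<rho>. loc J kappa j \<rho> * absd J Xm j \<rho>) = S"
    unfolding S_def ipS_eq_quadS by (simp add: power2_eq_square algebra_simps)
  with assms(8,9) have curvature_test: "ipS lumped J
      (\<lambda>j \<rho>. x1 J Xm j \<rho> *\<^sub>R ((1 / dt) *\<^sub>R (loc J (\<lambda>i. Xm i + dX i) j \<rho> - loc J Xm j \<rho>)))
      (\<lambda>j \<rho>. (loc J kappa j \<rho> * absd J Xm j \<rho>) *\<^sub>R nu J Xm j \<rho>) = S - A\<^sup>2 / L"
    unfolding A_def L_def by (simp add: power2_eq_square)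
  have "\<forall>p \<in> D1. inner (fun_of J dX p) e1 = 0"
    using assms(7) unfolding Vd_def by blast
  then show ?thesis
    using assms(10)[rule_format, OF assms(7)] curvature_test variance assms(6)
      ipS_displacement_normal[of dt lumped J Xm kappa dX]
      surface_area_le_linearisation[OF assms(4,5) J, of dX] energy_diff_ge_Bm[of D1 J dX Xm rho D2]
    unfolding S_def[symmetric] A_def[symmetric] L_def[symmetric] by auto
qed

end
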